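(* For any $n\geq 2$, the set $$\{{\sf Sum}(\sigma T_{k,1,n})\mid \sigma\in S_n,\ \sigma(k+1)=1,\ 1\leq k\leq n-1\}$$ is a basis of the free abelian group ${\rm Ker}(\beta_n)$, where $\sigma T=\{\sigma\circ\tau\mid\tau\in T\}$. In particular, the rank of ${\rm Ker}(\beta_n)$ equals $(n-1)!\cdot(n-1)$.
   Context: $S_m$ is the symmetric group on $\{1,\dots,m\}$ with product given by composition. Let $\mathbb Z\langle x_1,\dots,x_n\rangle$ be the free associative ring on $x_1,\dots,x_n$, with bracket $[u,v]=uv-vu$ and left-normed brackets $[u_1,\dots,u_r]=[[u_1,\dots,u_{r-1}],u_r]$. Let $\gamma_n$ be the additive subgroup generated by the monomials $x_{\sigma(1)}\cdots x_{\sigma(n)}$, $\sigma\in S_n$ (free abelian with these as basis); $\beta_n:\gamma_n\to\gamma_n$ is the homomorphism with $\beta_n(x_{\sigma(1)}\cdots x_{\sigma(n)})=[x_{\sigma(1)},\dots,x_{\sigma(n)}]$; for $T\subseteq S_n$, ${\sf Sum}(T)=\sum_{\sigma\in T}x_{\sigma(1)}\cdots x_{\sigma(n)}$. For $m\leq n$, $\iota_{m,n}:S_m\hookrightarrow S_n$ is the canonical embedding. An $(s,t)$-shuffle is a pair $(\alpha,\beta)$ of strictly increasing maps $\alpha:\{1,\dots,s\}\to\{1,\dots,s+t\}$, $\beta:\{1,\dots,t\}\to\{1,\dots,s+t\}$ with disjoint images; ${\sf Sh}^1(s,t)$ is the set of those with $\alpha(1)=1$. For $p,q\geq1$, $0\leq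 i\leq q-1$ and $(\alpha,\beta)\in{\sf Sh}^1(q-i,i)$, let $\tilde\sigma_{\alpha,\beta,p,q}\in S_{p+q}$ be given by $\tilde\sigma(j)=j$ for $1\leq j\leq p$, $\tilde\sigma(p+j)=p+\beta(i+1-j)$ for $1\leq j\leq i$, $\tilde\sigma(p+i+j)=p+\alpha(j)$ for $1\leq j\leq q-i$; let $\sigma_{\alpha,\beta,p,q}=\tilde\sigma_{\alpha,\beta,p,q}\circ(1,2)^i$ where $(1,2)$ is the transposition. Set $C_{p,q}=\{\sigma_{\alpha,\beta,p,q}\mid 0\leq i\leq q-1,\ (\alpha,\beta)\in{\sf Sh}^1(q-i,i)\}\subseteq S_{p+q}$. $\Phi_{k,l}\in S_{k+l}$ is defined by $\Phi_{k,l}(i)=i+k$ if $i\leq l$ and $\Phi_{k,l}(i)=i-l$ if $i>l$. Define $T_{k,l}=C_{k,l}\cup\{\Phi_{k,l}\circ\tau\mid\tau\in C_{l,k}\}\subseteq S_{k+l}$ and $T_{k,l,n}=\iota_{k+l,n}(T_{k,l})$ for $k+l\leq n$. *)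

theory Defs
  imports "HOL-Combinatorics.Combinatorics" "HOL-Library.Function_Algebras"
begin

(* Permutations of {1..m} are functions nat => nat that permute {1..m}
   (identity outside); the embedding iota_{m,n} is thus the identity. *)

(* Noncommutative polynomials: coefficient functions on words (nat lists). *)
(* lnbr (rev xs) = coefficient function of left-normed bracket [x_{xs!0},...,x_{xs!(r-1)}] *)
fun lnbr :: "nat list \<Rightarrow> nat list \<Rightarrow> int" where
  "lnbr [] w = (if w = [] then 1 else 0)"
| "lnbr [a] w = (if w = [a] then 1 else 0)"
| "lnbr (b # a # r) w =
     (if w \<noteq> [] \<and> last w = b then lnbr (a # r) (butlast w) else 0)
   - (if w \<noteq> [] \<and> hd w = b then lnbr (a # r) (tl w) else 0)"

definition lnb :: "nat list \<Rightarrow> nat list \<Rightarrow> int" where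
  "lnb xs = lnbr (rev xs)"

definition word :: "nat \<Rightarrow> (nat \<Rightarrow> nat) \<Rightarrow> nat list" where
  "word n \<sigma> = map \<sigma> [1..<n+1]"

(* gamma_n: Z-linear combinations of monomials, as coefficient functions on S_n *)
definition gamma :: "nat \<Rightarrow> ((nat \<Rightarrow> nat) \<Rightarrow> int) set" where
  "gamma n = {f. \<forall>\<tau>. f \<tau> \<noteq> 0 \<longrightarrow> \<tau> permutes {1..n}}"

definition beta :: "nat \<Rightarrow> ((nat \<Rightarrow> nat) \<Rightarrow> int) \<Rightarrow> ((nat \<Rightarrow> nat) \<Rightarrow> int)" where
  "beta n f = (\<lambda>\<tau>. if \<tau> permutes {1..n}
      then (\<Sum>\<sigma> | \<sigma> permutes {1..n}. f \<sigma> * lnb (word n \<sigma>) (word n \<tau>)) else 0)"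

definition ker_beta :: "nat \<Rightarrow> ((nat \<Rightarrow> nat) \<Rightarrow> int) set" where
  "ker_beta n = {f \<in> gamma n. beta n f = 0}"

definition mono :: "(nat \<Rightarrow> nat) \<Rightarrow> ((nat \<Rightarrow> nat) \<Rightarrow> int)" where
  "mono \<sigma> = (\<lambda>\<tau>. if \<tau> = \<sigma> then 1 else 0)"

definition Sum :: "(nat \<Rightarrow> nat) set \<Rightarrow> ((nat \<Rightarrow> nat) \<Rightarrow> int)" where
  "Sum T = (\<Sum>\<sigma>\<in>T. mono \<sigma>)"

definition Sh1 :: "nat \<Rightarrow> nat \<Rightarrow> ((nat \<Rightarrow> nat) \<times> (nat \<Rightarrow> nat)) set" where
  "Sh1 s t = {(\<alpha>, \<beta>). strict_mono_on {1..s} \<alpha> \<and> strict_mono_on {1..t} \<beta>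
      \<and> \<alpha> ` {1..s} \<subseteq> {1..s+t} \<and> \<beta> ` {1..t} \<subseteq> {1..s+t}
      \<and> \<alpha> ` {1..s} \<inter> \<beta> ` {1..t} = {} \<and> \<alpha> 1 = 1}"

definition sigma_tilde :: "(nat \<Rightarrow> nat) \<Rightarrow> (nat \<Rightarrow> nat) \<Rightarrow> nat \<Rightarrow> nat \<Rightarrow> nat \<Rightarrow> nat \<Rightarrow> nat" where
  "sigma_tilde \<alpha> \<beta> p q i j =
     (if 1 \<le> j \<and> j \<le> p then j
      else if p < j \<and> j \<le> p + i then p + \<beta> (i + 1 - (j - p))
      else if p + i < j \<and> j \<le> p + q then p + \<alpha> (j - p - i)
      else j)"

definition sigma_abpq :: "(nat \<Rightarrow> nat) \<Rightarrow> (nat \<Rightarrow> nat) \<Rightarrow> nat \<Rightarrow> nat \<Rightarrow> nat \<Rightarrow> nat \<Rightarrow> nat" where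
  "sigma_abpq \<alpha> \<beta> p q i = sigma_tilde \<alpha> \<beta> p q i \<circ> ((transpose (1::nat) 2) ^^ i)"

definition C :: "nat \<Rightarrow> nat \<Rightarrow> (nat \<Rightarrow> nat) set" where
  "C p q = {sigma_abpq \<alpha> \<beta> p q i | \<alpha> \<beta> i. i \<le> q - 1 \<and> (\<alpha>, \<beta>) \<in> Sh1 (q - i) i}"

definition Phi :: "nat \<Rightarrow> nat \<Rightarrow> nat \<Rightarrow> nat" where
  "Phi k l i = (if 1 \<le> i \<and> i \<le> l then i + k else if l < i \<and> i \<le> k + l then i - l else i)"

definition T :: "nat \<Rightarrow> nat \<Rightarrow> (nat \<Rightarrow> nat) set" where
  "T k l = C k l \<union> {Phi k l \<circ> \<tau> | \<tau>. \<tau> \<in> C l k}"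

definition zscale :: "int \<Rightarrow> ('a \<Rightarrow> int) \<Rightarrow> ('a \<Rightarrow> int)" where
  "zscale r f = (\<lambda>x. r * f x)"

end

theory Submission
  imports Defs
begin

text \<open>
  Besides the identity, \<open>T\<^sub>k\<^sub>,\<^sub>1\<close>
  consists of the permutations \<open>\<Phi>\<^sub>k\<^sub>,\<^sub>1 \<circ> \<tau>\<close>, \<open>\<tau> \<in> C\<^sub>1\<^sub>,\<^sub>k\<close>, whose words are, up to
  exchanging the first two letters, \<open>k + 1\<close> followed by a valley word: the elements of some
  \<open>S \<subseteq> {2..k}\<close> in decreasing order, then the rest of \<open>{1..k}\<close> in increasing order.
  Expanding \<open>[x, [y\<^sub>1, \<dots>, y\<^sub>k]]\<close> with the Jacobi identity gives exactly the signed sum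
  of the brackets of these words, so \<open>\<beta>\<^sub>n\<close> sends \<open>Sum (\<sigma> T\<^sub>k\<^sub>,\<^sub>1)\<close> to
  \<open>[L, x] + [x, L] = 0\<close>, bracketed with the remaining letters.

  If \<open>\<sigma>(k + 1) = 1\<close>, every \<open>\<rho> \<noteq> \<sigma>\<close> in \<open>\<sigma> T\<^sub>k\<^sub>,\<^sub>1\<close> puts the letter \<open>1\<close> at a position
  \<open>\<le> k\<close>. So the family is unitriangular with respect to the position of \<open>1\<close>: it is
  independent, and together with the monomials beginning with \<open>x\<^sub>1\<close> it spans \<open>\<gamma>\<^sub>n\<close>.
  On the span of those monomials \<open>\<beta>\<^sub>n\<close> is the identity, since \<open>x\<^sub>1 y\<^sub>2 \<cdots> y\<^sub>n\<close> is the
  only monomial of \<open>[x\<^sub>1, y\<^sub>2, \<dots>, y\<^sub>n]\<close> beginning with \<open>x\<^sub>1\<close>; hence the family spans the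
  kernel. It is indexed by the \<open>(n - 1)! (n - 1)\<close> permutations with \<open>\<sigma> 1 \<noteq> 1\<close>.
\<close>

definition nc_var :: "nat \<Rightarrow> nat list \<Rightarrow> int" where
  "nc_var a = (\<lambda>w. if w = [a] then 1 else 0)"

definition nc_mul :: "(nat list \<Rightarrow> int) \<Rightarrow> (nat list \<Rightarrow> int) \<Rightarrow> nat list \<Rightarrow> int" where
  "nc_mul f g = (\<lambda>w. \<Sum>i\<le>length w. f (take i w) * g (drop i w))"

definition nc_comm :: "(nat list \<Rightarrow> int) \<Rightarrow> (nat list \<Rightarrow> int) \<Rightarrow> nat list \<Rightarrow> int" where
  "nc_comm f g = nc_mul f g - nc_mul g f"

definition comm_var :: "nat \<Rightarrow> (nat list \<Rightarrow> int) \<Rightarrow> nat list \<Rightarrow> int" where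
  "comm_var b f = nc_comm f (nc_var b)"

definition comm_vars :: "nat list \<Rightarrow> (nat list \<Rightarrow> int) \<Rightarrow> nat list \<Rightarrow> int" where
  "comm_vars xs u = foldl (\<lambda>f b. comm_var b f) u xs"

lemma comm_vars_Nil [simp]: "comm_vars [] u = u"
  by (simp add: comm_vars_def)

lemma comm_vars_Cons [simp]: "comm_vars (b # xs) u = comm_vars xs (comm_var b u)"
  by (simp add: comm_vars_def)

lemma comm_vars_append: "comm_vars (xs @ ys) u = comm_vars ys (comm_vars xs u)"
  by (simp add: comm_vars_def)

lemma nc_mul_var_right:
  "nc_mul f (nc_var b) = (\<lambda>w. if w \<noteq> [] \<and> last w = b then f (butlast w) else 0)"
proof
  fix w :: "nat list"
  have drop_eq: "drop i w = [b] \<longleftrightarrow> w \<noteq> [] \<and> last w = b \<and> i = length w - 1"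
    if "i \<le> length w" for i
    using that by (cases w rule: rev_cases) (auto simp: drop_Cons' le_Suc_eq)
  have "nc_mul f (nc_var b) w =
      (\<Sum>i\<le>length w. if i = length w - 1 \<and> w \<noteq> [] \<and> last w = b then f (take i w) else 0)"
    unfolding nc_mul_def nc_var_def by (rule sum.cong) (auto simp: drop_eq)
  then show "nc_mul f (nc_var b) w = (if w \<noteq> [] \<and> last w = b then f (butlast w) else 0)"
    by (simp add: butlast_conv_take)
qed

lemma nc_mul_var_left:
  "nc_mul (nc_var b) f = (\<lambda>w. if w \<noteq> [] \<and> hd w = b then f (tl w) else 0)"
proof
  fix w :: "nat list"
  have take_eq: "take i w = [b] \<longleftrightarrow> w \<noteq> [] \<and> hd w = b \<and> i = 1" if "i \<le> length w" for i
    using that by (cases w; cases i) (auto simp: take_Suc)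
  have "nc_mul (nc_var b) f w = (\<Sum>i\<le>length w. if i = 1 \<and> w \<noteq> [] \<and> hd w = b then f (drop i w) else 0)"
    unfolding nc_mul_def nc_var_def by (rule sum.cong) (auto simp: take_eq)
  then show "nc_mul (nc_var b) f w = (if w \<noteq> [] \<and> hd w = b then f (tl w) else 0)"
    by (cases w) (auto simp: drop_Suc Suc_le_eq)
qed

lemma comm_var_apply:
  "comm_var b f w = (if w \<noteq> [] \<and> last w = b then f (butlast w) else 0)
                  - (if w \<noteq> [] \<and> hd w = b then f (tl w) else 0)"
  by (simp add: comm_var_def nc_comm_def nc_mul_var_right nc_mul_var_left)

lemma nc_mul_assoc: "nc_mul (nc_mul f g) h = nc_mul f (nc_mul g h)"
proof
  fix w :: "nat list"
  define n where "n = length w"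
  define G where "G j l = f (take j w) * g (take l (drop j w)) * h (drop (j + l) w)" for j l
  have "nc_mul (nc_mul f g) h w = (\<Sum>i\<le>n. \<Sum>j\<le>i. G j (i - j))"
    unfolding nc_mul_def G_def n_def
    by (rule sum.cong) (auto simp: sum_distrib_right min_def drop_take intro!: sum.cong)
  also have "\<dots> = (\<Sum>(j, l)\<in>{(j, l). j + l \<le> n}. G j l)"
    by (rule sum.triangle_reindex_eq[symmetric])
  also have "{(j, l). j + l \<le> n} = Sigma {..n} (\<lambda>j. {..n - j})"
    by auto
  also have "(\<Sum>(j, l)\<in>Sigma {..n} (\<lambda>j. {..n - j}). G j l) = (\<Sum>j\<le>n. \<Sum>l\<le>n - j. G j l)"
    by (rule sum.Sigma[symmetric]) auto
  also have "\<dots> = nc_mul f (nc_mul g h) w"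
    unfolding nc_mul_def G_def n_def
    by (rule sum.cong) (auto simp: sum_distrib_left add.commute mult.assoc)
  finally show "nc_mul (nc_mul f g) h w = nc_mul f (nc_mul g h) w" .
qed

lemma nc_mul_diff_left: "nc_mul (f - g) h = nc_mul f h - nc_mul g h"
  by (simp add: nc_mul_def fun_eq_iff algebra_simps sum_subtractf)

lemma nc_mul_diff_right: "nc_mul h (f - g) = nc_mul h f - nc_mul h g"
  by (simp add: nc_mul_def fun_eq_iff algebra_simps sum_subtractf)

lemma nc_comm_comm_var:
  "nc_comm u (comm_var b f) = comm_var b (nc_comm u f) - nc_comm (comm_var b u) f"
  unfolding comm_var_def nc_comm_def
  by (simp add: nc_mul_diff_left nc_mul_diff_right nc_mul_assoc algebra_simps)

lemma comm_var_anticomm: "comm_var a (nc_var b) = - comm_var b (nc_var a)"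
  by (simp add: comm_var_def nc_comm_def)

lemma sum_fun_apply: "(\<Sum>s\<in>S. F s) x = (\<Sum>s\<in>S. F s x)"
  by (induction S rule: infinite_finite_induct) auto

lemma comm_var_sum: "comm_var b (\<Sum>s\<in>S. F s) = (\<Sum>s\<in>S. comm_var b (F s))"
  by (auto simp: comm_var_apply sum_fun_apply sum_subtractf fun_eq_iff intro!: sum.cong)

lemma comm_var_zscale: "comm_var b (zscale c f) = zscale c (comm_var b f)"
  by (auto simp: comm_var_apply zscale_def fun_eq_iff algebra_simps)

lemma comm_var_uminus: "comm_var b (- f) = - comm_var b f"
  by (auto simp: comm_var_apply fun_eq_iff)

lemma comm_vars_sum: "comm_vars xs (\<Sum>s\<in>S. F s) = (\<Sum>s\<in>S. comm_vars xs (F s))"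
  by (induction xs arbitrary: F) (simp_all add: comm_var_sum)

lemma comm_vars_uminus: "comm_vars xs (- f) = - comm_vars xs f"
  by (induction xs arbitrary: f) (simp_all add: comm_var_uminus)

lemma comm_vars_zero: "comm_vars xs 0 = 0"
  by (induction xs) (simp_all add: comm_var_def nc_comm_def nc_mul_def zero_fun_def)

lemma lnb_Cons: "lnb (a # xs) = comm_vars xs (nc_var a)"
proof (induction xs rule: rev_induct)
  case Nil
  show ?case by (simp add: lnb_def nc_var_def)
next
  case (snoc b xs)
  have "lnb (a # xs @ [b]) = comm_var b (lnb (a # xs))"
    by (cases "rev xs") (auto simp: lnb_def comm_var_apply fun_eq_iff)
  with snoc show ?case by (simp add: comm_vars_append)
qed

lemma lnb_append: "xs \<noteq> [] \<Longrightarrow> lnb (xs @ ys) = comm_vars ys (lnb xs)"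
  by (cases xs) (auto simp: lnb_Cons comm_vars_append)

lemma sum_Pow_insert:
  assumes "finite A" "a \<notin> A"
  shows "(\<Sum>S\<in>Pow (insert a A). f S) = (\<Sum>S\<in>Pow A. f S) + (\<Sum>S\<in>Pow A. f (insert a S))"
proof -
  have "inj_on (insert a) (Pow A)"
    using assms(2) by (auto intro!: inj_onI)
  moreover have "Pow A \<inter> insert a ` Pow A = {}"
    using assms(2) by auto
  ultimately show ?thesis
    using assms(1) by (simp add: Pow_insert sum.union_disjoint sum.reindex)
qed

lemma sorted_list_of_set_insert_greater:
  assumes "finite A" "\<forall>a\<in>A. a < m"
  shows "sorted_list_of_set (insert m A) = sorted_list_of_set A @ [m]"
proof (rule sorted_distinct_set_unique)
  show "sorted (sorted_list_of_set A @ [m])" "distinct (sorted_list_of_set A @ [m])"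
    using assms by (auto simp: sorted_append less_imp_le)
  show "set (sorted_list_of_set (insert m A)) = set (sorted_list_of_set A @ [m])"
    using assms by (simp del: sorted_list_of_set_insert_remove)
qed (rule sorted_sorted_list_of_set, rule distinct_sorted_list_of_set)

definition valley_word :: "nat \<Rightarrow> nat set \<Rightarrow> nat list" where
  "valley_word k S = rev (sorted_list_of_set S) @ sorted_list_of_set ({1..k} - S)"

lemma valley_word_Suc:
  assumes "S \<subseteq> {1..k}"
  shows "valley_word (Suc k) S = valley_word k S @ [Suc k]"
proof -
  have "{1..Suc k} - S = insert (Suc k) ({1..k} - S)"
    using assms by auto
  moreover have "sorted_list_of_set (insert (Suc k) ({1..k} - S))
      = sorted_list_of_set ({1..k} - S) @ [Suc k]"
    by (rule sorted_list_of_set_insert_greater) auto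
  ultimately show ?thesis
    by (simp add: valley_word_def)
qed

lemma valley_word_Suc_insert:
  assumes "S \<subseteq> {1..k}"
  shows "valley_word (Suc k) (insert (Suc k) S) = Suc k # valley_word k S"
proof -
  have "{1..Suc k} - insert (Suc k) S = {1..k} - S"
    using assms by auto
  moreover have "sorted_list_of_set (insert (Suc k) S) = sorted_list_of_set S @ [Suc k]"
    using assms by (intro sorted_list_of_set_insert_greater) (auto intro: finite_subset)
  ultimately show ?thesis
    by (simp add: valley_word_def)
qed

lemma lnb_map_upt_Suc:
  assumes "1 \<le> k"
  shows "lnb (map y [1..<Suc k+1]) = comm_var (y (Suc k)) (lnb (map y [1..<k+1]))"
proof -
  have "map y [1..<Suc k+1] = map y [1..<k+1] @ [y (Suc k)]"
    by simp
  then show ?thesis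
    using assms by (simp add: lnb_append del: upt_Suc)
qed

lemma nc_comm_lnb_expansion:
  assumes "1 \<le> k"
  shows "nc_comm u (lnb (map y [1..<k+1])) =
    (\<Sum>S\<in>Pow {2..k}. zscale ((-1) ^ card S) (comm_vars (map y (valley_word k S)) u))"
  using assms
proof (induction k arbitrary: u rule: nat_induct_at_least)
  case base
  have "Pow {2..1::nat} = {{}}"
    by auto
  then show ?case
    by (simp add: valley_word_def lnb_Cons comm_var_def zscale_def)
next
  case (Suc k)
  define L where "L = lnb (map y [1..<k+1])"
  define b where "b = y (Suc k)"
  define summand where "summand S = zscale ((-1) ^ card S) (comm_vars (map y (valley_word (Suc k) S)) u)"
    for S
  have keep: "comm_var b (zscale ((-1) ^ card S) (comm_vars (map y (valley_word k S)) u)) = summand S"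
    if "S \<in> Pow {2..k}" for S
  proof -
    have "valley_word (Suc k) S = valley_word k S @ [Suc k]"
      using that by (intro valley_word_Suc) auto
    then show ?thesis
      by (simp add: summand_def comm_var_zscale comm_vars_append b_def)
  qed
  have add: "- zscale ((-1) ^ card S) (comm_vars (map y (valley_word k S)) (comm_var b u))
      = summand (insert (Suc k) S)" if "S \<in> Pow {2..k}" for S
  proof -
    have "valley_word (Suc k) (insert (Suc k) S) = Suc k # valley_word k S"
      using that by (intro valley_word_Suc_insert) auto
    moreover have "finite S" "Suc k \<notin> S"
      using that by (auto intro: finite_subset)
    ultimately show ?thesis
      by (simp add: summand_def b_def zscale_def fun_eq_iff)
  qed
  have "nc_comm u (lnb (map y [1..<Suc k+1])) = comm_var b (nc_comm u L) - nc_comm (comm_var b u) L"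
    unfolding lnb_map_upt_Suc[OF Suc.hyps] L_def b_def by (rule nc_comm_comm_var)
  also have "\<dots> = (\<Sum>S\<in>Pow {2..k}. summand S) + (\<Sum>S\<in>Pow {2..k}. summand (insert (Suc k) S))"
    unfolding Suc.IH[folded L_def] comm_var_sum by (simp add: keep add diff_conv_add_uminus sum_negf[symmetric])
  also have "\<dots> = (\<Sum>S\<in>Pow {2..Suc k}. summand S)"
    using Suc.hyps by (simp add: atLeastAtMostSuc_conv sum_Pow_insert)
  finally show ?case
    by (simp add: summand_def)
qed

lemma finite_subset_interval: "S \<subseteq> {a..b :: nat} \<Longrightarrow> finite S"
  by (rule finite_subset) auto

lemma sorted_list_of_set_complement:
  fixes k :: nat
  assumes "1 \<le> k" "S \<subseteq> {2..k}"
  shows "sorted_list_of_set ({1..k} - S) = 1 # sorted_list_of_set ({2..k} - S)"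
proof -
  have "1 \<in> {1..k} - S"
    using assms by auto
  then have "Min ({1..k} - S) = 1"
    by (intro Min_eqI) auto
  moreover have "{1..k} - S - {1} = {2..k} - S"
    by auto
  moreover have "sorted_list_of_set ({1..k} - S)
      = Min ({1..k} - S) # sorted_list_of_set ({1..k} - S - {Min ({1..k} - S)})"
    using \<open>1 \<in> {1..k} - S\<close> by (intro sorted_list_of_set_nonempty) auto
  ultimately show ?thesis
    by simp
qed

lemma set_valley_word: "S \<subseteq> {2..k} \<Longrightarrow> set (valley_word k S) = {1..k}"
  by (auto simp: valley_word_def finite_subset_interval)

lemma length_valley_word:
  assumes "S \<subseteq> {2..k}"
  shows "length (valley_word k S) = k"
proof -
  have "card S \<le> k"
    using card_mono[OF _ assms] by simp
  moreover have "card ({1..k} - S) = k - card S"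
    using assms by (subst card_Diff_subset) (auto simp: finite_subset_interval)
  ultimately show ?thesis
    by (simp add: valley_word_def)
qed

lemma valley_word_takeWhile:
  assumes "1 \<le> k" "S \<subseteq> {2..k}"
  shows "set (takeWhile (\<lambda>x. x \<noteq> 1) (valley_word k S)) = S"
proof -
  have "\<forall>x\<in>set (rev (sorted_list_of_set S)). x \<noteq> 1"
    using assms(2) finite_subset_interval[OF assms(2)] by auto
  then have "takeWhile (\<lambda>x. x \<noteq> 1) (valley_word k S) = rev (sorted_list_of_set S)"
    unfolding valley_word_def sorted_list_of_set_complement[OF assms]
    by (subst takeWhile_append2) auto
  then show ?thesis
    using finite_subset_interval[OF assms(2)] by simp
qed

lemma inj_on_valley_word:
  assumes "1 \<le> k"
  shows "inj_on (valley_word k) (Pow {2..k})"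
proof (rule inj_onI)
  fix S S' assume "S \<in> Pow {2..k}" "S' \<in> Pow {2..k}" "valley_word k S = valley_word k S'"
  then show "S = S'"
    using valley_word_takeWhile[OF assms, of S] valley_word_takeWhile[OF assms, of S'] by simp
qed

fun swap12 :: "'a list \<Rightarrow> 'a list" where
  "swap12 (a # b # xs) = b # a # xs"
| "swap12 xs = xs"

lemma swap12_swap12 [simp]: "swap12 (swap12 xs) = xs"
  by (cases xs rule: swap12.cases) auto

lemma set_swap12 [simp]: "set (swap12 xs) = set xs"
  by (cases xs rule: swap12.cases) auto

lemma map_swap12: "map f (swap12 xs) = swap12 (map f xs)"
  by (cases xs rule: swap12.cases) auto

lemma lnb_swap12:
  assumes "2 \<le> length xs"
  shows "lnb (swap12 xs) = - lnb xs"
proof (cases xs rule: swap12.cases)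
  case (1 a b ys)
  then show ?thesis
    using comm_var_anticomm[of a b] by (simp add: lnb_Cons comm_vars_uminus)
qed (use assms in auto)

lemma map_comp_transpose12:
  assumes "3 \<le> m"
  shows "map (g \<circ> transpose (1::nat) 2) [1..<m] = swap12 (map g [1..<m])"
proof -
  have "[1..<m] = 1 # [2..<m]"
    using upt_conv_Cons[of 1 m] assms by (simp add: numeral_2_eq_2 del: upt_Suc)
  also have "[2..<m] = 2 # [3..<m]"
    using upt_conv_Cons[of 2 m] assms by (simp del: upt_Suc)
  finally have "[1..<m] = 1 # 2 # [3..<m]" .
  moreover have "map (g \<circ> transpose (1::nat) 2) [3..<m] = map g [3..<m]"
    by (rule map_cong) (auto simp: transpose_def)
  ultimately show ?thesis
    by (simp add: transpose_def del: upt_Suc)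
qed

lemma funpow_transpose: "transpose a b ^^ i = (if even i then id else transpose a b)"
  by (induction i) auto

declare upt_Suc [simp del]

lemma Phi_outside: "j = 0 \<or> k + l < j \<Longrightarrow> Phi k l j = j"
  by (auto simp: Phi_def)

lemma sigma_abpq_outside:
  assumes "i < q" "j = 0 \<or> p + q < j" "2 \<le> p + q"
  shows "sigma_abpq \<alpha> \<beta> p q i j = j"
  using assms by (auto simp: sigma_abpq_def sigma_tilde_def funpow_transpose transpose_def)

lemma map_Phi_sigma_tilde:
  assumes i: "i \<le> k" and \<alpha>_range: "\<alpha> ` {1..k-i} \<subseteq> {1..k}"
    and \<beta>_range: "\<beta> ` {1..i} \<subseteq> {1..k}"
  shows "map (Phi k 1 \<circ> sigma_tilde \<alpha> \<beta> 1 k i) [1..<k+2]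
       = Suc k # rev (map \<beta> [1..<i+1]) @ map \<alpha> [1..<k-i+1]"
proof -
  define g where "g = Phi k 1 \<circ> sigma_tilde \<alpha> \<beta> 1 k i"
  have blocks: "[1..<k+2] = [1] @ [2..<i+2] @ [i+2..<k+2]"
  proof -
    have "[2..<i+2+(k-i)] = [2..<i+2] @ [i+2..<i+2+(k-i)]"
      by (rule upt_add_eq_append) simp
    moreover have "i + 2 + (k - i) = k + 2"
      using i by simp
    ultimately have "[2..<k+2] = [2..<i+2] @ [i+2..<k+2]"
      by simp
    then show ?thesis
      using upt_conv_Cons[of 1 "k+2"] by (simp add: numeral_2_eq_2)
  qed
  have \<beta>_block: "map g [2..<i+2] = rev (map \<beta> [1..<i+1])"
  proof (rule nth_equalityI)
    fix m assume "m < length (map g [2..<i+2])"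
    then have m: "m < i"
      by simp
    then have "i - m \<in> {1..i}"
      by auto
    then have "\<beta> (i - m) \<in> {1..k}"
      using \<beta>_range by blast
    then show "map g [2..<i+2] ! m = rev (map \<beta> [1..<i+1]) ! m"
      using m i by (simp add: g_def sigma_tilde_def Phi_def rev_nth Suc_diff_Suc)
  qed simp
  have \<alpha>_block: "map g [i+2..<k+2] = map \<alpha> [1..<k-i+1]"
  proof (rule nth_equalityI)
    fix m assume "m < length (map g [i+2..<k+2])"
    then have m: "m < k - i"
      by simp
    then have "Suc m \<in> {1..k-i}"
      by auto
    then have "\<alpha> (Suc m) \<in> {1..k}"
      using \<alpha>_range by blast
    then show "map g [i+2..<k+2] ! m = map \<alpha> [1..<k-i+1] ! m"
      using m i by (simp add: g_def sigma_tilde_def Phi_def)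
  qed (use i in simp)
  have "g 1 = Suc k"
    by (simp add: g_def sigma_tilde_def Phi_def)
  then show ?thesis
    unfolding g_def[symmetric] blocks map_append \<alpha>_block \<beta>_block by simp
qed

lemma map_Phi_sigma_abpq:
  assumes k: "1 \<le> k" and i: "i \<le> k - 1" and sh: "(\<alpha>, \<beta>) \<in> Sh1 (k - i) i"
  shows "map (Phi k 1 \<circ> sigma_abpq \<alpha> \<beta> 1 k i) [1..<k+2]
       = (if odd i then swap12 else id) (Suc k # rev (map \<beta> [1..<i+1]) @ map \<alpha> [1..<k-i+1])"
proof -
  define g where "g = Phi k 1 \<circ> sigma_tilde \<alpha> \<beta> 1 k i"
  have "k - i + i = k"
    using i k by simp
  with sh have "\<alpha> ` {1..k-i} \<subseteq> {1..k}" "\<beta> ` {1..i} \<subseteq> {1..k}"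
    by (auto simp: Sh1_def)
  then have g_word: "map g [1..<k+2] = Suc k # rev (map \<beta> [1..<i+1]) @ map \<alpha> [1..<k-i+1]"
    unfolding g_def using i by (intro map_Phi_sigma_tilde) auto
  have "Phi k 1 \<circ> sigma_abpq \<alpha> \<beta> 1 k i = g \<circ> (transpose 1 2 ^^ i)"
    by (simp add: sigma_abpq_def g_def o_assoc)
  moreover have "map (g \<circ> transpose 1 2) [1..<k+2] = swap12 (map g [1..<k+2])"
    using k by (intro map_comp_transpose12) simp
  ultimately show ?thesis
    using g_word by (simp add: funpow_transpose)
qed

lemma map_upt_strict_mono_on:
  assumes "strict_mono_on {1..s} f"
  shows "map f [1..<s+1] = sorted_list_of_set (f ` {1..s})"
proof (rule sorted_distinct_set_unique)
  have "sorted_wrt (<) (map f [1..<s+1])"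
    unfolding sorted_wrt_map
    by (rule sorted_wrt_mono_rel[OF _ sorted_wrt_upt]) (auto intro: strict_mono_onD[OF assms])
  then show "sorted (map f [1..<s+1])" "distinct (map f [1..<s+1])"
    by (auto simp: strict_sorted_iff)
  have "{1..<s+1} = {1..s}"
    by auto
  then show "set (map f [1..<s+1]) = set (sorted_list_of_set (f ` {1..s}))"
    by simp
qed auto

lemma Sh1_lists:
  assumes k: "1 \<le> k" and i: "i \<le> k - 1" and sh: "(\<alpha>, \<beta>) \<in> Sh1 (k - i) i"
  shows "\<beta> ` {1..i} \<subseteq> {2..k}"
    and "card (\<beta> ` {1..i}) = i"
    and "map \<beta> [1..<i+1] = sorted_list_of_set (\<beta> ` {1..i})"
    and "map \<alpha> [1..<k-i+1] = sorted_list_of_set ({1..k} - \<beta> ` {1..i})"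
proof -
  have ki: "k - i + i = k"
    using i k by simp
  from sh have \<alpha>_mono: "strict_mono_on {1..k-i} \<alpha>" and \<beta>_mono: "strict_mono_on {1..i} \<beta>"
    and \<alpha>_range: "\<alpha> ` {1..k-i} \<subseteq> {1..k}" and \<beta>_range: "\<beta> ` {1..i} \<subseteq> {1..k}"
    and disjoint: "\<alpha> ` {1..k-i} \<inter> \<beta> ` {1..i} = {}" and "\<alpha> 1 = 1"
    unfolding Sh1_def ki by auto
  have "1 \<in> {1..k-i}"
    using i k by simp
  then have "1 \<notin> \<beta> ` {1..i}"
    using disjoint \<open>\<alpha> 1 = 1\<close> by (metis disjoint_iff image_eqI)
  then show "\<beta> ` {1..i} \<subseteq> {2..k}"
  proof (intro subsetI)
    fix y assume "y \<in> \<beta> ` {1..i}" "1 \<notin> \<beta> ` {1..i}"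
    then have "y \<in> {1..k}" "y \<noteq> 1"
      using \<beta>_range by blast+
    then show "y \<in> {2..k}"
      by simp
  qed
  show card_\<beta>: "card (\<beta> ` {1..i}) = i"
    using strict_mono_on_imp_inj_on[OF \<beta>_mono] by (simp add: card_image)
  show "map \<beta> [1..<i+1] = sorted_list_of_set (\<beta> ` {1..i})"
    by (rule map_upt_strict_mono_on[OF \<beta>_mono])
  have "\<alpha> ` {1..k-i} = {1..k} - \<beta> ` {1..i}"
  proof (rule card_subset_eq)
    show "\<alpha> ` {1..k-i} \<subseteq> {1..k} - \<beta> ` {1..i}"
      using \<alpha>_range disjoint by auto
    have "card (\<alpha> ` {1..k-i}) = k - i"
      using strict_mono_on_imp_inj_on[OF \<alpha>_mono] by (simp add: card_image)
    then show "card (\<alpha> ` {1..k-i}) = card ({1..k} - \<beta> ` {1..i})"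
      using \<beta>_range card_\<beta> by (simp add: card_Diff_subset)
  qed simp
  then show "map \<alpha> [1..<k-i+1] = sorted_list_of_set ({1..k} - \<beta> ` {1..i})"
    using map_upt_strict_mono_on[OF \<alpha>_mono] by simp
qed

lemma strict_mono_on_nth:
  assumes "sorted_wrt (<) xs"
  shows "strict_mono_on {1..length xs} (\<lambda>j. xs ! (j - 1))"
  by (rule strict_mono_onI) (auto intro!: sorted_wrt_nth_less[OF assms])

lemma image_nth_atLeastAtMost: "(\<lambda>j. xs ! (j - 1)) ` {1..length xs} = set xs"
proof
  show "set xs \<subseteq> (\<lambda>j. xs ! (j - 1)) ` {1..length xs}"
  proof
    fix x assume "x \<in> set xs"
    then obtain m where "m < length xs" "xs ! m = x"
      by (auto simp: in_set_conv_nth)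
    then show "x \<in> (\<lambda>j. xs ! (j - 1)) ` {1..length xs}"
      by (intro image_eqI[where x = "Suc m"]) auto
  qed
qed auto

lemma map_nth_upt: "map (\<lambda>j. xs ! (j - 1)) [1..<length xs + 1] = xs"
  by (rule nth_equalityI) auto

lemma Sh1_of_subset:
  assumes k: "1 \<le> k" and S: "S \<subseteq> {2..k}"
  obtains \<alpha> \<beta> where "(\<alpha>, \<beta>) \<in> Sh1 (k - card S) (card S)"
    "map \<beta> [1..<card S+1] = sorted_list_of_set S"
    "map \<alpha> [1..<k - card S+1] = sorted_list_of_set ({1..k} - S)"
proof -
  define xa where "xa = sorted_list_of_set ({1..k} - S)"
  define xb where "xb = sorted_list_of_set S"
  define \<alpha> where "\<alpha> = (\<lambda>j. xa ! (j - 1))"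
  define \<beta> where "\<beta> = (\<lambda>j. xb ! (j - 1))"
  have "finite S"
    using S by (rule finite_subset_interval)
  have card_S: "card S \<le> k - 1"
    using card_mono[OF _ S] by simp
  have len_xa: "length xa = k - card S"
    using S \<open>finite S\<close> by (subst xa_def, subst length_sorted_list_of_set, subst card_Diff_subset) auto
  have len_xb: "length xb = card S"
    by (simp add: xb_def)
  have sorted: "sorted_wrt (<) xa" "sorted_wrt (<) xb"
    by (simp_all add: xa_def xb_def)
  have "\<alpha> 1 = 1"
    using sorted_list_of_set_complement[OF k S] by (simp add: \<alpha>_def xa_def)
  moreover have "strict_mono_on {1..k - card S} \<alpha>" "strict_mono_on {1..card S} \<beta>"
    using strict_mono_on_nth[OF sorted(1)] strict_mono_on_nth[OF sorted(2)]
    by (simp_all add: \<alpha>_def \<beta>_def len_xa len_xb)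
  moreover have "\<alpha> ` {1..k - card S} = {1..k} - S" "\<beta> ` {1..card S} = S"
    using image_nth_atLeastAtMost[of xa, folded \<alpha>_def, unfolded len_xa]
      image_nth_atLeastAtMost[of xb, folded \<beta>_def, unfolded len_xb] \<open>finite S\<close>
    by (simp_all add: xa_def xb_def)
  moreover have "k - card S + card S = k"
    using card_S k by simp
  ultimately have "(\<alpha>, \<beta>) \<in> Sh1 (k - card S) (card S)"
    using S by (auto simp: Sh1_def)
  moreover have "map \<beta> [1..<card S+1] = sorted_list_of_set S"
    using map_nth_upt[of xb, folded \<beta>_def, unfolded len_xb] by (simp add: xb_def)
  moreover have "map \<alpha> [1..<k - card S+1] = sorted_list_of_set ({1..k} - S)"
    using map_nth_upt[of xa, folded \<alpha>_def, unfolded len_xa] by (simp add: xa_def)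
  ultimately show ?thesis
    by (rule that)
qed

definition PhiC :: "nat \<Rightarrow> (nat \<Rightarrow> nat) set" where
  "PhiC k = {Phi k 1 \<circ> \<tau> | \<tau>. \<tau> \<in> C 1 k}"

definition PhiC_word :: "nat \<Rightarrow> nat set \<Rightarrow> nat list" where
  "PhiC_word k S = (if odd (card S) then swap12 else id) (Suc k # valley_word k S)"

lemma PhiC_word_of_PhiC:
  assumes "1 \<le> k" "\<tau> \<in> PhiC k"
  obtains S where "S \<subseteq> {2..k}" "map \<tau> [1..<k+2] = PhiC_word k S"
proof -
  from assms(2) obtain \<alpha> \<beta> i where \<tau>: "\<tau> = Phi k 1 \<circ> sigma_abpq \<alpha> \<beta> 1 k i"
    and i: "i \<le> k - 1" and sh: "(\<alpha>, \<beta>) \<in> Sh1 (k - i) i"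
    by (auto simp: PhiC_def C_def)
  note lists = Sh1_lists[OF assms(1) i sh]
  have "map \<tau> [1..<k+2] = PhiC_word k (\<beta> ` {1..i})"
    unfolding \<tau> map_Phi_sigma_abpq[OF assms(1) i sh] PhiC_word_def valley_word_def
      lists(2,3,4) ..
  with lists(1) show ?thesis
    by (rule that)
qed

lemma PhiC_of_PhiC_word:
  assumes k: "1 \<le> k" and S: "S \<subseteq> {2..k}"
  obtains \<tau> where "\<tau> \<in> PhiC k" "map \<tau> [1..<k+2] = PhiC_word k S"
proof -
  obtain \<alpha> \<beta> where sh: "(\<alpha>, \<beta>) \<in> Sh1 (k - card S) (card S)"
    and \<beta>: "map \<beta> [1..<card S+1] = sorted_list_of_set S"
    and \<alpha>: "map \<alpha> [1..<k - card S+1] = sorted_list_of_set ({1..k} - S)"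
    using Sh1_of_subset[OF k S] .
  have i: "card S \<le> k - 1"
    using card_mono[OF _ S] by simp
  have "Phi k 1 \<circ> sigma_abpq \<alpha> \<beta> 1 k (card S) \<in> PhiC k"
    using i sh by (auto simp: PhiC_def C_def)
  moreover have "map (Phi k 1 \<circ> sigma_abpq \<alpha> \<beta> 1 k (card S)) [1..<k+2] = PhiC_word k S"
    unfolding map_Phi_sigma_abpq[OF k i sh] \<alpha> \<beta> PhiC_word_def valley_word_def ..
  ultimately show ?thesis
    by (rule that)
qed

lemma words_PhiC:
  assumes "1 \<le> k"
  shows "(\<lambda>\<tau>. map \<tau> [1..<k+2]) ` PhiC k = PhiC_word k ` Pow {2..k}"
proof
  show "(\<lambda>\<tau>. map \<tau> [1..<k+2]) ` PhiC k \<subseteq> PhiC_word k ` Pow {2..k}"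
    by (auto elim: PhiC_word_of_PhiC[OF assms])
  show "PhiC_word k ` Pow {2..k} \<subseteq> (\<lambda>\<tau>. map \<tau> [1..<k+2]) ` PhiC k"
    by (auto elim!: PhiC_of_PhiC_word[OF assms] intro: rev_image_eqI)
qed

lemma PhiC_word_cases:
  assumes "S \<subseteq> {2..k}"
  obtains "even (card S)" "PhiC_word k S = Suc k # valley_word k S"
  | a w where "odd (card S)" "a \<in> S" "PhiC_word k S = a # Suc k # w"
proof (cases "even (card S)")
  case True
  then show ?thesis
    by (intro that(1)) (simp_all add: PhiC_word_def)
next
  case False
  have "finite S"
    using assms by (rule finite_subset_interval)
  moreover have "S \<noteq> {}"
    using False by auto
  ultimately obtain a r where ar: "rev (sorted_list_of_set S) = a # r"
    by (cases "rev (sorted_list_of_set S)") auto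
  then have "a \<in> S"
    using \<open>finite S\<close> by (metis list.set_intros(1) set_rev set_sorted_list_of_set)
  with False show ?thesis
    by (intro that(2)[of a]) (simp_all add: PhiC_word_def valley_word_def ar)
qed

lemma hd_PhiC_word: "S \<subseteq> {2..k} \<Longrightarrow> hd (PhiC_word k S) = Suc k \<longleftrightarrow> even (card S)"
  by (rule PhiC_word_cases[of S k]) auto

lemma inj_on_PhiC_word:
  assumes "1 \<le> k"
  shows "inj_on (PhiC_word k) (Pow {2..k})"
proof (rule inj_onI)
  fix S S' assume S: "S \<in> Pow {2..k}" and S': "S' \<in> Pow {2..k}"
    and eq: "PhiC_word k S = PhiC_word k S'"
  then have parity: "odd (card S) \<longleftrightarrow> odd (card S')"
    using hd_PhiC_word[of S k] hd_PhiC_word[of S' k] by simp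
  have "Suc k # valley_word k S = Suc k # valley_word k S'"
  proof (cases "odd (card S)")
    case True
    then have "swap12 (Suc k # valley_word k S) = swap12 (Suc k # valley_word k S')"
      using eq parity by (simp add: PhiC_word_def)
    then show ?thesis
      by (metis swap12_swap12)
  next
    case False
    then show ?thesis
      using eq parity by (simp add: PhiC_word_def)
  qed
  then show "S = S'"
    using inj_on_valley_word[OF assms] S S' by (auto dest: inj_onD)
qed

lemma PhiC_fixes:
  assumes "1 \<le> k" "\<tau> \<in> PhiC k" "j \<notin> {1..k+1}"
  shows "\<tau> j = j"
proof -
  from assms(2) obtain \<alpha> \<beta> i where \<tau>: "\<tau> = Phi k 1 \<circ> sigma_abpq \<alpha> \<beta> 1 k i" and "i \<le> k - 1"
    by (auto simp: PhiC_def C_def)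
  moreover have j: "j = 0 \<or> 1 + k < j"
    using assms(3) by auto
  ultimately have "sigma_abpq \<alpha> \<beta> 1 k i j = j"
    using assms(1) by (intro sigma_abpq_outside) auto
  then show ?thesis
    using j by (simp add: \<tau> Phi_outside)
qed

lemma inj_on_map_PhiC:
  assumes "1 \<le> k"
  shows "inj_on (\<lambda>\<tau>. map \<tau> [1..<k+2]) (PhiC k)"
proof (rule inj_onI, rule ext)
  fix \<tau> \<tau>' j assume "\<tau> \<in> PhiC k" "\<tau>' \<in> PhiC k" "map \<tau> [1..<k+2] = map \<tau>' [1..<k+2]"
  then show "\<tau> j = \<tau>' j"
  proof (cases "j \<in> {1..k+1}")
    case True
    then have "j \<in> set [1..<k+2]"
      by auto
    with \<open>map \<tau> [1..<k+2] = map \<tau>' [1..<k+2]\<close> show ?thesis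
      by (simp add: map_eq_conv)
  next
    case False
    with PhiC_fixes[OF assms] \<open>\<tau> \<in> PhiC k\<close> \<open>\<tau>' \<in> PhiC k\<close> show ?thesis
      by metis
  qed
qed

lemma C_1_right: "C k 1 = {id}"
proof -
  have \<sigma>_id: "sigma_abpq \<alpha> \<beta> k 1 0 = id" if "\<alpha> 1 = 1" for \<alpha> \<beta> :: "nat \<Rightarrow> nat"
  proof
    fix x
    show "sigma_abpq \<alpha> \<beta> k 1 0 x = id x"
      using that by (cases "x = k + 1") (auto simp: sigma_abpq_def sigma_tilde_def)
  qed
  have "(id, id) \<in> Sh1 1 0"
    by (auto simp: Sh1_def strict_mono_on_def)
  then have "sigma_abpq id id k 1 0 \<in> C k 1"
    unfolding C_def by force
  moreover have "\<alpha> 1 = 1" if "(\<alpha>, \<beta>) \<in> Sh1 1 0" for \<alpha> \<beta>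
    using that by (simp add: Sh1_def)
  ultimately show ?thesis
    using \<sigma>_id by (auto simp: C_def)
qed

lemma T_1_right: "T k 1 = insert id (PhiC k)"
  unfolding T_def C_1_right PhiC_def by simp

lemma id_notin_PhiC:
  assumes "1 \<le> k"
  shows "id \<notin> PhiC k"
proof
  assume "id \<in> PhiC k"
  then obtain S where S: "S \<subseteq> {2..k}" and word: "map id [1..<k+2] = PhiC_word k S"
    by (rule PhiC_word_of_PhiC[OF assms])
  have "hd (PhiC_word k S) = 1"
    by (simp add: word[symmetric] hd_map hd_upt)
  show False
  proof (rule PhiC_word_cases[OF S])
    assume "PhiC_word k S = Suc k # valley_word k S"
    with \<open>hd (PhiC_word k S) = 1\<close> assms show False
      by simp
  next
    fix a w assume "a \<in> S" "PhiC_word k S = a # Suc k # w"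
    with \<open>hd (PhiC_word k S) = 1\<close> S show False
      by auto
  qed
qed

lemma set_PhiC_word: "S \<subseteq> {2..k} \<Longrightarrow> set (PhiC_word k S) = {1..k+1}"
  by (auto simp: PhiC_word_def set_valley_word)

lemma permutes_T:
  assumes "1 \<le> k" "\<tau> \<in> T k 1"
  shows "\<tau> permutes {1..k+1}"
proof (cases "\<tau> = id")
  case False
  then have \<tau>: "\<tau> \<in> PhiC k"
    using assms(2) unfolding T_1_right by simp
  then obtain S where S: "S \<subseteq> {2..k}" and word: "map \<tau> [1..<k+2] = PhiC_word k S"
    by (rule PhiC_word_of_PhiC[OF assms(1)])
  have "\<tau> ` {1..k+1} = set (map \<tau> [1..<k+2])"
    by auto
  also have "\<dots> = {1..k+1}"
    unfolding word by (rule set_PhiC_word[OF S])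
  finally have "\<tau> ` {1..k+1} = {1..k+1}" .
  then have "bij_betw \<tau> {1..k+1} {1..k+1}"
    by (simp add: bij_betw_def eq_card_imp_inj_on)
  then show ?thesis
    using PhiC_fixes[OF assms(1) \<tau>] by (intro bij_imp_permutes) auto
qed (simp add: permutes_id)

lemma finite_T:
  assumes "1 \<le> k"
  shows "finite (T k 1)"
proof (rule finite_subset)
  show "T k 1 \<subseteq> {\<tau>. \<tau> permutes {1..k+1}}"
    using permutes_T[OF assms] by blast
qed (simp add: finite_permutations)

lemma T_moves_last:
  assumes "1 \<le> k" "\<tau> \<in> T k 1" "\<tau> \<noteq> id"
  obtains j where "1 \<le> j" "j \<le> k" "\<tau> j = k + 1"
proof -
  have "\<tau> \<in> PhiC k"
    using assms(2,3) unfolding T_1_right by simp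
  then obtain S where S: "S \<subseteq> {2..k}" and word: "map \<tau> [1..<k+2] = PhiC_word k S"
    by (rule PhiC_word_of_PhiC[OF assms(1)])
  have \<tau>_nth: "\<tau> (Suc m) = PhiC_word k S ! m" if "m < k + 1" for m
  proof -
    have "map \<tau> [1..<k+2] ! m = \<tau> (Suc m)"
      using that by simp
    then show ?thesis
      by (simp only: word)
  qed
  show ?thesis
  proof (rule PhiC_word_cases[OF S])
    assume "PhiC_word k S = Suc k # valley_word k S"
    then have "\<tau> 1 = k + 1"
      using \<tau>_nth[of 0] by simp
    with assms(1) show ?thesis
      by (intro that[of 1]) simp_all
  next
    fix a w assume "a \<in> S" "PhiC_word k S = a # Suc k # w"
    moreover from this have "2 \<le> k"
      using S by auto
    ultimately have "\<tau> 2 = k + 1"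
      using \<tau>_nth[of 1] by (simp add: numeral_2_eq_2)
    with \<open>2 \<le> k\<close> show ?thesis
      by (intro that[of 2]) simp_all
  qed
qed

lemma lnb_map_PhiC_word:
  assumes "1 \<le> k" "S \<subseteq> {2..k}"
  shows "lnb (map \<sigma> (PhiC_word k S)) =
    zscale ((-1) ^ card S) (comm_vars (map \<sigma> (valley_word k S)) (nc_var (\<sigma> (Suc k))))"
proof -
  have "2 \<le> length (map \<sigma> (Suc k # valley_word k S))"
    using assms by (simp add: length_valley_word)
  then show ?thesis
    by (auto simp: PhiC_word_def map_swap12 lnb_swap12 lnb_Cons zscale_def fun_eq_iff)
qed

text \<open>The identity contributes \<open>[L, x]\<close>, and the rest of \<open>T\<^sub>k\<^sub>,\<^sub>1\<close> the expansion of \<open>[x, L]\<close>.\<close>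
lemma sum_lnb_comp_T:
  assumes k: "1 \<le> k"
  shows "(\<Sum>\<tau>\<in>T k 1. lnb (map (\<sigma> \<circ> \<tau>) [1..<k+2])) = 0"
proof -
  define F where "F w = lnb (map \<sigma> w)" for w
  define x where "x = nc_var (\<sigma> (Suc k))"
  define L where "L = lnb (map \<sigma> [1..<k+1])"
  have "finite (PhiC k)"
    using finite_T[OF k] unfolding T_1_right by simp
  then have "(\<Sum>\<tau>\<in>T k 1. lnb (map (\<sigma> \<circ> \<tau>) [1..<k+2]))
      = F [1..<k+2] + (\<Sum>\<tau>\<in>PhiC k. F (map \<tau> [1..<k+2]))"
    using id_notin_PhiC[OF k] unfolding T_1_right by (simp add: F_def)
  also have "(\<Sum>\<tau>\<in>PhiC k. F (map \<tau> [1..<k+2])) = (\<Sum>w\<in>PhiC_word k ` Pow {2..k}. F w)"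
    unfolding words_PhiC[OF k, symmetric]
    by (rule sum.reindex[OF inj_on_map_PhiC[OF k], symmetric, unfolded o_def])
  also have "\<dots> = (\<Sum>S\<in>Pow {2..k}. F (PhiC_word k S))"
    by (rule sum.reindex[OF inj_on_PhiC_word[OF k], unfolded o_def])
  also have "\<dots> = (\<Sum>S\<in>Pow {2..k}. zscale ((-1) ^ card S) (comm_vars (map \<sigma> (valley_word k S)) x))"
    by (rule sum.cong) (simp_all add: F_def x_def lnb_map_PhiC_word[OF k])
  also have "\<dots> = nc_comm x L"
    unfolding L_def by (rule nc_comm_lnb_expansion[OF k, symmetric])
  also have "F [1..<k+2] = nc_comm L x"
    using lnb_map_upt_Suc[OF k, of \<sigma>] by (simp add: F_def L_def x_def comm_var_def)
  also have "nc_comm L x + nc_comm x L = 0"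
    by (simp add: nc_comm_def)
  finally show ?thesis .
qed

lemma Sum_apply: "finite M \<Longrightarrow> Sum M \<rho> = (if \<rho> \<in> M then 1 else 0)"
  by (simp add: Sum_def sum_fun_apply mono_def)

lemma word_comp_permutes:
  assumes "\<tau> permutes {1..m}" "m \<le> n"
  shows "word n (\<sigma> \<circ> \<tau>) = map (\<sigma> \<circ> \<tau>) [1..<m+1] @ map \<sigma> [m+1..<n+1]"
proof -
  have "[1..<n+1] = [1..<m+1] @ [m+1..<n+1]"
    using assms(2) upt_add_eq_append[of 1 "m+1" "n - m"] by simp
  moreover have "map (\<sigma> \<circ> \<tau>) [m+1..<n+1] = map \<sigma> [m+1..<n+1]"
    by (rule map_cong) (auto simp: permutes_not_in[OF assms(1)])
  ultimately show ?thesis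
    by (simp add: word_def)
qed

lemma sum_lnb_word_comp_T:
  assumes "1 \<le> k" "k + 1 \<le> n"
  shows "(\<Sum>\<tau>\<in>T k 1. lnb (word n (\<sigma> \<circ> \<tau>))) = 0"
proof -
  have "(\<Sum>\<tau>\<in>T k 1. lnb (word n (\<sigma> \<circ> \<tau>)))
      = (\<Sum>\<tau>\<in>T k 1. comm_vars (map \<sigma> [k+2..<n+1]) (lnb (map (\<sigma> \<circ> \<tau>) [1..<k+2])))"
    using assms by (intro sum.cong) (simp_all add: word_comp_permutes[OF permutes_T] lnb_append)
  also have "\<dots> = comm_vars (map \<sigma> [k+2..<n+1]) 0"
    unfolding comm_vars_sum[symmetric] sum_lnb_comp_T[OF assms(1)] ..
  finally show ?thesis
    by (simp add: comm_vars_zero)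
qed

lemma beta_Sum:
  assumes "finite M" "M \<subseteq> {\<rho>. \<rho> permutes {1..n}}" "\<tau> permutes {1..n}"
  shows "beta n (Sum M) \<tau> = (\<Sum>\<rho>\<in>M. lnb (word n \<rho>) (word n \<tau>))"
proof -
  have "beta n (Sum M) \<tau> = (\<Sum>\<rho>\<in>{\<rho>. \<rho> permutes {1..n}}. Sum M \<rho> * lnb (word n \<rho>) (word n \<tau>))"
    using assms(3) by (simp add: beta_def)
  also have "\<dots> = (\<Sum>\<rho>\<in>{\<rho>. \<rho> permutes {1..n}}. if \<rho> \<in> M then lnb (word n \<rho>) (word n \<tau>) else 0)"
    by (rule sum.cong) (simp_all add: Sum_apply[OF assms(1)])
  also have "\<dots> = (\<Sum>\<rho>\<in>M. lnb (word n \<rho>) (word n \<tau>))"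
    using assms(2) by (simp add: sum.inter_restrict[symmetric] finite_permutations Int_absorb1)
  finally show ?thesis .
qed

lemma comp_T_permutes:
  assumes "\<sigma> permutes {1..n}" "1 \<le> k" "k + 1 \<le> n" "\<tau> \<in> T k 1"
  shows "\<sigma> \<circ> \<tau> permutes {1..n}"
proof -
  have "\<tau> permutes {1..n}"
    using assms by (intro permutes_subset[OF permutes_T]) auto
  then show ?thesis
    using assms(1) by (rule permutes_compose)
qed

lemma Sum_comp_T_mem_ker_beta:
  assumes \<sigma>: "\<sigma> permutes {1..n}" and k: "1 \<le> k" "k + 1 \<le> n"
  shows "Sum ((\<lambda>\<tau>. \<sigma> \<circ> \<tau>) ` T k 1) \<in> ker_beta n"
proof -
  define M where "M = (\<lambda>\<tau>. \<sigma> \<circ> \<tau>) ` T k 1"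
  have "finite M"
    using finite_T[OF k(1)] by (simp add: M_def)
  have M_perms: "M \<subseteq> {\<rho>. \<rho> permutes {1..n}}"
    using comp_T_permutes[OF \<sigma> k] by (auto simp: M_def)
  have "inj_on (\<lambda>\<tau>. \<sigma> \<circ> \<tau>) (T k 1)"
    using permutes_inj[OF \<sigma>] by (auto simp: inj_on_def fun_eq_iff inj_def)
  then have "(\<Sum>\<rho>\<in>M. lnb (word n \<rho>) w) = (\<Sum>\<tau>\<in>T k 1. lnb (word n (\<sigma> \<circ> \<tau>))) w" for w
    by (simp add: M_def sum.reindex sum_fun_apply)
  then have "(\<Sum>\<rho>\<in>M. lnb (word n \<rho>) w) = 0" for w
    by (simp only: sum_lnb_word_comp_T[OF k] zero_fun_def)
  then have "beta n (Sum M) \<tau> = 0" for \<tau>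
    using beta_Sum[OF \<open>finite M\<close> M_perms] by (cases "\<tau> permutes {1..n}") (simp_all add: beta_def)
  then have "beta n (Sum M) = 0"
    by auto
  moreover have "Sum M \<in> gamma n"
    using M_perms by (auto simp: gamma_def Sum_apply[OF \<open>finite M\<close>] split: if_splits)
  ultimately show ?thesis
    by (simp add: ker_beta_def M_def)
qed

interpretation Z: module "zscale :: int \<Rightarrow> ('a \<Rightarrow> int) \<Rightarrow> 'a \<Rightarrow> int"
  by unfold_locales (simp_all add: zscale_def fun_eq_iff algebra_simps)

locale unitriangular =
  fixes I :: "(nat \<Rightarrow> nat) set" and M :: "(nat \<Rightarrow> nat) \<Rightarrow> (nat \<Rightarrow> nat) set"
    and rank :: "(nat \<Rightarrow> nat) \<Rightarrow> nat"
  assumes finite_M: "\<sigma> \<in> I \<Longrightarrow> finite (M \<sigma>)"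
    and diag_M: "\<sigma> \<in> I \<Longrightarrow> \<sigma> \<in> M \<sigma>"
    and rank_M: "\<sigma> \<in> I \<Longrightarrow> \<rho> \<in> M \<sigma> \<Longrightarrow> \<rho> \<noteq> \<sigma> \<Longrightarrow> rank \<rho> < rank \<sigma>"
begin

lemma Sum_M_apply: "\<sigma> \<in> I \<Longrightarrow> Sum (M \<sigma>) \<rho> = (if \<rho> \<in> M \<sigma> then 1 else 0)"
  by (simp add: Sum_apply finite_M)

lemma inj_on_Sum_M: "inj_on (\<lambda>\<sigma>. Sum (M \<sigma>)) I"
proof (rule inj_onI)
  fix \<sigma> \<sigma>' assume I: "\<sigma> \<in> I" "\<sigma>' \<in> I" and eq: "Sum (M \<sigma>) = Sum (M \<sigma>')"
  have "\<sigma> \<in> M \<sigma>'" "\<sigma>' \<in> M \<sigma>"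
    using fun_cong[OF eq, of \<sigma>] fun_cong[OF eq, of \<sigma>'] I
    by (auto simp: Sum_M_apply diag_M split: if_splits)
  then show "\<sigma> = \<sigma>'"
    using rank_M[OF I(1)] rank_M[OF I(2)] by fastforce
qed

text \<open>In a vanishing combination, evaluate at the index of largest rank with nonzero
  coefficient: only its own vector contributes there.\<close>
lemma independent_Sum_M: "\<not> Z.dependent ((\<lambda>\<sigma>. Sum (M \<sigma>)) ` I)"
proof
  assume "Z.dependent ((\<lambda>\<sigma>. Sum (M \<sigma>)) ` I)"
  then obtain t u where "finite t" and t: "t \<subseteq> (\<lambda>\<sigma>. Sum (M \<sigma>)) ` I"
    and comb: "(\<Sum>v\<in>t. zscale (u v) v) = 0" and "\<exists>v\<in>t. u v \<noteq> 0"
    unfolding Z.dependent_explicit by blast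
  define A where "A = {\<sigma> \<in> I. Sum (M \<sigma>) \<in> t \<and> u (Sum (M \<sigma>)) \<noteq> 0}"
  have "(\<lambda>\<sigma>. Sum (M \<sigma>)) ` A \<subseteq> t" "A \<subseteq> I"
    by (auto simp: A_def)
  then have "finite A"
    using \<open>finite t\<close> inj_on_subset[OF inj_on_Sum_M] by (metis finite_imageD finite_subset)
  moreover have "A \<noteq> {}"
    using \<open>\<exists>v\<in>t. u v \<noteq> 0\<close> t by (auto simp: A_def)
  ultimately obtain \<sigma> where \<sigma>: "\<sigma> \<in> A" and "Max (rank ` A) = rank \<sigma>"
    by (rule obtains_MAX)
  then have max: "rank \<sigma>' \<le> rank \<sigma>" if "\<sigma>' \<in> A" for \<sigma>'
    using \<open>finite A\<close> that by (metis Max_ge finite_imageI imageI)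
  have others: "u v * v \<sigma> = 0" if "v \<in> t - {Sum (M \<sigma>)}" for v
  proof (rule ccontr)
    assume nz: "u v * v \<sigma> \<noteq> 0"
    from that t obtain \<sigma>' where "\<sigma>' \<in> I" "v = Sum (M \<sigma>')"
      by blast
    with nz that have "\<sigma>' \<in> A" "\<sigma> \<in> M \<sigma>'" "\<sigma> \<noteq> \<sigma>'"
      by (auto simp: A_def Sum_M_apply split: if_splits)
    then show False
      using rank_M[OF \<open>\<sigma>' \<in> I\<close>] max by fastforce
  qed
  have "\<sigma> \<in> I" "Sum (M \<sigma>) \<in> t"
    using \<sigma> by (auto simp: A_def)
  have "0 = (\<Sum>v\<in>t. u v * v \<sigma>)"
    using fun_cong[OF comb, of \<sigma>] by (simp add: sum_fun_apply zscale_def)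
  also have "\<dots> = u (Sum (M \<sigma>)) * Sum (M \<sigma>) \<sigma>"
    using others by (simp add: sum.remove[OF \<open>finite t\<close> \<open>Sum (M \<sigma>) \<in> t\<close>] sum.neutral)
  also have "\<dots> = u (Sum (M \<sigma>))"
    using \<open>\<sigma> \<in> I\<close> by (simp add: Sum_M_apply diag_M)
  finally show False
    using \<sigma> by (simp add: A_def)
qed

lemma mono_mem_span_Sum_M:
  assumes "I \<subseteq> P" "\<And>\<sigma>. \<sigma> \<in> I \<Longrightarrow> M \<sigma> \<subseteq> P" "\<sigma> \<in> P"
  shows "mono \<sigma> \<in> Z.span ((\<lambda>\<sigma>. Sum (M \<sigma>)) ` I \<union> mono ` (P - I))"
  using assms(3)
proof (induction "rank \<sigma>" arbitrary: \<sigma> rule: less_induct)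
  case less
  show ?case
  proof (cases "\<sigma> \<in> I")
    case False
    with less.prems show ?thesis
      by (intro Z.span_base) blast
  next
    case True
    have "Sum (M \<sigma>) = mono \<sigma> + (\<Sum>\<rho>\<in>M \<sigma> - {\<sigma>}. mono \<rho>)"
      unfolding Sum_def using finite_M[OF True] diag_M[OF True] by (rule sum.remove)
    then have "mono \<sigma> = Sum (M \<sigma>) - (\<Sum>\<rho>\<in>M \<sigma> - {\<sigma>}. mono \<rho>)"
      by simp
    moreover have "Sum (M \<sigma>) \<in> Z.span ((\<lambda>\<sigma>. Sum (M \<sigma>)) ` I \<union> mono ` (P - I))"
      using True by (intro Z.span_base) blast
    moreover have "(\<Sum>\<rho>\<in>M \<sigma> - {\<sigma>}. mono \<rho>) \<in> Z.span ((\<lambda>\<sigma>. Sum (M \<sigma>)) ` I \<union> mono ` (P - I))"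
      using rank_M[OF True] assms(2)[OF True] by (intro Z.span_sum less.hyps) auto
    ultimately show ?thesis
      by (metis Z.span_diff)
  qed
qed

end

abbreviation perms_moving_1 :: "nat \<Rightarrow> (nat \<Rightarrow> nat) set" where
  "perms_moving_1 n \<equiv> {\<sigma>. \<sigma> permutes {1..n} \<and> \<sigma> 1 \<noteq> 1}"

text \<open>For \<open>\<sigma>(k + 1) = 1\<close> this is the support \<open>\<sigma> T\<^sub>k\<^sub>,\<^sub>1\<close> of the basis element indexed by
  \<open>(\<sigma>, k)\<close>; the index \<open>k\<close> is determined by \<open>\<sigma>\<close>.\<close>
definition basis_support :: "(nat \<Rightarrow> nat) \<Rightarrow> (nat \<Rightarrow> nat) set" where
  "basis_support \<sigma> = (\<lambda>\<tau>. \<sigma> \<circ> \<tau>) ` T (inv \<sigma> 1 - 1) 1"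

lemma inv_apply_1:
  fixes \<sigma> :: "nat \<Rightarrow> nat"
  assumes "\<sigma> permutes {1..n}" "\<sigma> 1 \<noteq> 1"
  shows "2 \<le> inv \<sigma> 1" "inv \<sigma> 1 \<le> n" "\<sigma> (inv \<sigma> 1) = 1"
proof -
  show "\<sigma> (inv \<sigma> 1) = 1"
    using assms(1) by (rule permutes_inverses(1))
  moreover have "inv \<sigma> 1 \<in> {1..n}"
    using permutes_in_image[OF permutes_inv[OF assms(1)], of 1] assms
    by (metis atLeastAtMost_iff le_refl permutes_not_in)
  ultimately show "2 \<le> inv \<sigma> 1" "inv \<sigma> 1 \<le> n"
    using assms(2) by (auto simp: numeral_2_eq_2 Suc_le_eq le_less)
qed

lemma basis_support_eq:
  assumes "\<sigma> permutes {1..n}" "\<sigma> (k + 1) = 1"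
  shows "basis_support \<sigma> = (\<lambda>\<tau>. \<sigma> \<circ> \<tau>) ` T k 1"
proof -
  have "inv \<sigma> 1 = k + 1"
    using assms by (metis permutes_inverses(2))
  then show ?thesis
    unfolding basis_support_def by simp
qed

lemma unitriangular_basis_support:
  "unitriangular (perms_moving_1 n) basis_support (\<lambda>\<sigma>. inv \<sigma> 1)"
proof
  fix \<sigma> assume \<sigma>: "\<sigma> \<in> perms_moving_1 n"
  note pos = inv_apply_1[of \<sigma> n]
  define k where "k = inv \<sigma> 1 - 1"
  have k: "1 \<le> k" "k + 1 \<le> n" "inv \<sigma> 1 = k + 1"
    using pos \<sigma> by (auto simp: k_def)
  have supp: "basis_support \<sigma> = (\<lambda>\<tau>. \<sigma> \<circ> \<tau>) ` T k 1"
    unfolding basis_support_def k_def ..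
  show "finite (basis_support \<sigma>)"
    unfolding supp using finite_T[OF k(1)] by (rule finite_imageI)
  show "\<sigma> \<in> basis_support \<sigma>"
    unfolding supp T_1_right by (rule image_eqI[of _ _ id]) auto
  fix \<rho> assume "\<rho> \<in> basis_support \<sigma>" "\<rho> \<noteq> \<sigma>"
  then obtain \<tau> where "\<tau> \<in> T k 1" and \<rho>: "\<rho> = \<sigma> \<circ> \<tau>"
    unfolding supp by blast
  with \<open>\<rho> \<noteq> \<sigma>\<close> have \<tau>: "\<tau> \<in> T k 1" "\<tau> \<noteq> id"
    by auto
  obtain j where j: "1 \<le> j" "j \<le> k" "\<tau> j = k + 1"
    using T_moves_last[OF k(1) \<tau>] .
  have "\<rho> permutes {1..n}"
    using comp_T_permutes[OF _ k(1,2) \<tau>(1)] \<sigma> \<rho> by simp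
  moreover have "\<rho> j = 1"
    using \<rho> j(3) pos \<sigma> k(3) by auto
  ultimately have "inv \<rho> 1 = j"
    by (metis permutes_inverses(2))
  then show "inv \<rho> 1 < inv \<sigma> 1"
    using j k(3) by simp
qed

lemma beta_add: "beta n (f + g) = beta n f + beta n g"
  by (auto simp: beta_def fun_eq_iff sum.distrib algebra_simps)

lemma beta_zscale: "beta n (zscale c f) = zscale c (beta n f)"
  by (auto simp: beta_def fun_eq_iff zscale_def sum_distrib_left algebra_simps)

lemma subspace_ker_beta: "Z.subspace (ker_beta n)"
proof (rule Z.subspaceI)
  show "0 \<in> ker_beta n"
    by (simp add: ker_beta_def gamma_def beta_def fun_eq_iff)
  show "f + g \<in> ker_beta n" if "f \<in> ker_beta n" "g \<in> ker_beta n" for f g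
    using that by (auto simp: ker_beta_def gamma_def beta_add) (metis add.right_neutral)
  show "zscale c f \<in> ker_beta n" if "f \<in> ker_beta n" for c f
    using that unfolding ker_beta_def gamma_def by (auto simp: beta_zscale) (auto simp: zscale_def)
qed

lemma lnb_Cons_Cons:
  assumes "a \<notin> set xs"
  shows "lnb (a # xs) (a # ys) = (if xs = ys then 1 else 0)"
  using assms
proof (induction xs arbitrary: ys rule: rev_induct)
  case Nil
  then show ?case
    by (simp add: lnb_Cons nc_var_def)
next
  case (snoc b xs)
  have IH: "comm_vars xs (nc_var a) (a # zs) = (if xs = zs then 1 else 0)" for zs
    using snoc by (simp add: lnb_Cons)
  have "a \<noteq> b"
    using snoc.prems by auto
  then show ?case
    using IH by (cases ys rule: rev_cases) (auto simp: lnb_Cons comm_vars_append comm_var_apply)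
qed

lemma word_fixing_1:
  assumes "\<sigma> permutes {1..n}" "\<sigma> 1 = 1" "1 \<le> n"
  shows "word n \<sigma> = 1 # map \<sigma> [2..<n+1]" "1 \<notin> set (map \<sigma> [2..<n+1])"
proof -
  have "[1..<n+1] = 1 # [2..<n+1]"
    using upt_conv_Cons[of 1 "n+1"] assms(3) by (simp add: numeral_2_eq_2)
  then show "word n \<sigma> = 1 # map \<sigma> [2..<n+1]"
    using assms(2) by (simp add: word_def)
  show "1 \<notin> set (map \<sigma> [2..<n+1])"
  proof
    assume "1 \<in> set (map \<sigma> [2..<n+1])"
    then obtain j where "2 \<le> j" "\<sigma> j = \<sigma> 1"
      using assms(2) by auto
    then show False
      using injD[OF permutes_inj[OF assms(1)]] by fastforce
  qed
qed

lemma inj_on_word: "inj_on (word n) {\<sigma>. \<sigma> permutes {1..n}}"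
proof (rule inj_onI, rule ext)
  fix \<sigma> \<tau> j assume "\<sigma> \<in> {\<sigma>. \<sigma> permutes {1..n}}" "\<tau> \<in> {\<sigma>. \<sigma> permutes {1..n}}"
    and "word n \<sigma> = word n \<tau>"
  then show "\<sigma> j = \<tau> j"
    by (cases "j \<in> {1..n}") (auto simp: word_def map_eq_conv permutes_not_in)
qed

lemma lnb_word_fixing_1:
  assumes "\<sigma> permutes {1..n}" "\<tau> permutes {1..n}" "\<sigma> 1 = 1" "\<tau> 1 = 1" "1 \<le> n"
  shows "lnb (word n \<sigma>) (word n \<tau>) = (if \<sigma> = \<tau> then 1 else 0)"
proof -
  have "lnb (word n \<sigma>) (word n \<tau>) = (if word n \<sigma> = word n \<tau> then 1 else 0)"
    using word_fixing_1[OF assms(1,3,5)] word_fixing_1[OF assms(2,4,5)] by (simp add: lnb_Cons_Cons)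
  then show ?thesis
    using inj_onD[OF inj_on_word] assms(1,2) by auto
qed

text \<open>On the span of the monomials whose first letter is \<open>x\<^sub>1\<close>, \<open>\<beta>\<^sub>n\<close> is the identity.\<close>
lemma ker_beta_fixing_1_eq_0:
  assumes "v \<in> ker_beta n" "\<And>\<tau>. v \<tau> \<noteq> 0 \<Longrightarrow> \<tau> 1 = 1" "1 \<le> n"
  shows "v = 0"
proof
  fix \<tau>
  show "v \<tau> = 0 \<tau>"
  proof (rule ccontr)
    assume "v \<tau> \<noteq> 0 \<tau>"
    then have \<tau>: "\<tau> permutes {1..n}" "\<tau> 1 = 1"
      using assms by (auto simp: ker_beta_def gamma_def)
    have "beta n v \<tau> = (\<Sum>\<sigma> | \<sigma> permutes {1..n}. v \<sigma> * lnb (word n \<sigma>) (word n \<tau>))"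
      using \<tau> by (simp add: beta_def)
    also have "\<dots> = (\<Sum>\<sigma> | \<sigma> permutes {1..n}. if \<sigma> = \<tau> then v \<sigma> else 0)"
    proof (rule sum.cong)
      fix \<sigma> assume "\<sigma> \<in> {\<sigma>. \<sigma> permutes {1..n}}"
      then show "v \<sigma> * lnb (word n \<sigma>) (word n \<tau>) = (if \<sigma> = \<tau> then v \<sigma> else 0)"
        using \<tau> assms(2,3) by (cases "v \<sigma> = 0") (auto simp: lnb_word_fixing_1)
    qed simp
    also have "\<dots> = v \<tau>"
      using \<tau> by (simp add: finite_permutations)
    finally show False
      using assms(1) \<open>v \<tau> \<noteq> 0 \<tau>\<close> by (simp add: ker_beta_def)
  qed
qed

lemma Sum_basis_support_mem_ker_beta:
  assumes "\<sigma> \<in> perms_moving_1 n"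
  shows "Sum (basis_support \<sigma>) \<in> ker_beta n"
proof -
  define k where "k = inv \<sigma> 1 - 1"
  have k: "1 \<le> k" "k + 1 \<le> n" "\<sigma> (k + 1) = 1"
    using inv_apply_1[of \<sigma> n] assms by (auto simp: k_def)
  then show ?thesis
    using assms basis_support_eq[of \<sigma> n k] Sum_comp_T_mem_ker_beta[of \<sigma> n k] by simp
qed

lemma basis_support_permutes:
  assumes "\<sigma> \<in> perms_moving_1 n"
  shows "basis_support \<sigma> \<subseteq> {\<rho>. \<rho> permutes {1..n}}"
proof -
  define k where "k = inv \<sigma> 1 - 1"
  have k: "1 \<le> k" "k + 1 \<le> n" "\<sigma> (k + 1) = 1"
    using inv_apply_1[of \<sigma> n] assms by (auto simp: k_def)
  then show ?thesis
    using assms basis_support_eq[of \<sigma> n k] comp_T_permutes[of \<sigma> n k] by auto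
qed

lemma gamma_eq_sum_mono:
  assumes "f \<in> gamma n"
  shows "f = (\<Sum>\<sigma> | \<sigma> permutes {1..n}. zscale (f \<sigma>) (mono \<sigma>))"
proof
  fix \<tau>
  have "(\<Sum>\<sigma> | \<sigma> permutes {1..n}. zscale (f \<sigma>) (mono \<sigma>)) \<tau>
      = (\<Sum>\<sigma> | \<sigma> permutes {1..n}. if \<tau> = \<sigma> then f \<sigma> else 0)"
    by (simp add: sum_fun_apply zscale_def mono_def if_distrib cong: if_cong)
  also have "\<dots> = f \<tau>"
    using assms by (auto simp: gamma_def finite_permutations)
  finally show "f \<tau> = (\<Sum>\<sigma> | \<sigma> permutes {1..n}. zscale (f \<sigma>) (mono \<sigma>)) \<tau>"
    by simp
qed

lemma span_mono_support:
  assumes "v \<in> Z.span (mono ` A)" "v \<tau> \<noteq> 0"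
  shows "\<tau> \<in> A"
proof -
  have "Z.subspace {v. \<forall>\<tau>. v \<tau> \<noteq> 0 \<longrightarrow> \<tau> \<in> A}"
    by (rule Z.subspaceI) (auto simp: zscale_def, metis add.right_neutral)
  moreover have "mono ` A \<subseteq> {v. \<forall>\<tau>. v \<tau> \<noteq> 0 \<longrightarrow> \<tau> \<in> A}"
    by (auto simp: mono_def split: if_splits)
  ultimately show ?thesis
    using Z.span_minimal assms by blast
qed

lemma span_basis_eq_ker_beta:
  assumes n: "1 \<le> n"
  shows "Z.span ((\<lambda>\<sigma>. Sum (basis_support \<sigma>)) ` perms_moving_1 n) = ker_beta n"
    (is "Z.span ?B = _")
proof
  show "Z.span ?B \<subseteq> ker_beta n"
    using Sum_basis_support_mem_ker_beta
    by (intro Z.span_minimal[OF _ subspace_ker_beta]) blast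
  show "ker_beta n \<subseteq> Z.span ?B"
  proof
    fix f assume f: "f \<in> ker_beta n"
    define P where "P = {\<sigma>. \<sigma> permutes {1..n}}"
    interpret unitriangular "perms_moving_1 n" basis_support "\<lambda>\<sigma>. inv \<sigma> 1"
      by (rule unitriangular_basis_support)
    have "mono \<sigma> \<in> Z.span (?B \<union> mono ` (P - perms_moving_1 n))" if "\<sigma> \<in> P" for \<sigma>
      using that basis_support_permutes by (intro mono_mem_span_Sum_M) (auto simp: P_def)
    then have "(\<Sum>\<sigma>\<in>P. zscale (f \<sigma>) (mono \<sigma>)) \<in> Z.span (?B \<union> mono ` (P - perms_moving_1 n))"
      by (intro Z.span_sum Z.span_scale)
    moreover have "f = (\<Sum>\<sigma>\<in>P. zscale (f \<sigma>) (mono \<sigma>))"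
      using f unfolding P_def ker_beta_def by (blast intro: gamma_eq_sum_mono)
    ultimately have "f \<in> Z.span (?B \<union> mono ` (P - perms_moving_1 n))"
      by simp
    then obtain b v where "f = b + v" and b: "b \<in> Z.span ?B"
      and v: "v \<in> Z.span (mono ` (P - perms_moving_1 n))"
      unfolding Z.span_Un by blast
    have "b \<in> ker_beta n"
      using b \<open>Z.span ?B \<subseteq> ker_beta n\<close> by blast
    then have "v \<in> ker_beta n"
      using Z.subspace_diff[OF subspace_ker_beta f] \<open>f = b + v\<close> by (metis add_diff_cancel_left')
    moreover have "v \<tau> \<noteq> 0 \<Longrightarrow> \<tau> 1 = 1" for \<tau>
      using span_mono_support[OF v] by (auto simp: P_def)
    ultimately have "v = 0"
      using ker_beta_fixing_1_eq_0 n by blast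
    then show "f \<in> Z.span ?B"
      using \<open>f = b + v\<close> b by simp
  qed
qed

lemma permutes_fixing_1:
  "{\<sigma>. \<sigma> permutes {1..n::nat} \<and> \<sigma> 1 = 1} = {\<sigma>. \<sigma> permutes {2..n}}"
proof (intro set_eqI iffI)
  fix \<sigma> assume "\<sigma> \<in> {\<sigma>. \<sigma> permutes {1..n} \<and> \<sigma> 1 = 1}"
  moreover have "{1..n} \<subseteq> insert 1 {2..n}"
    by auto
  ultimately have "\<sigma> permutes insert 1 {2..n}" "\<sigma> 1 = 1"
    using permutes_subset by auto
  then show "\<sigma> \<in> {\<sigma>. \<sigma> permutes {2..n}}"
    using permutes_insert_lemma by fastforce
next
  fix \<sigma> assume "\<sigma> \<in> {\<sigma>. \<sigma> permutes {2..n}}"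
  then show "\<sigma> \<in> {\<sigma>. \<sigma> permutes {1..n} \<and> \<sigma> 1 = 1}"
    by (auto intro: permutes_subset permutes_not_in)
qed

lemma card_perms_moving_1:
  assumes "1 \<le> n"
  shows "card (perms_moving_1 n) = fact (n - 1) * (n - 1)"
proof -
  define P where "P = {\<sigma>. \<sigma> permutes {1..n}}"
  define P1 where "P1 = {\<sigma>. \<sigma> permutes {1..n} \<and> \<sigma> 1 = 1}"
  have "P1 \<subseteq> P" "finite P"
    by (auto simp: P_def P1_def finite_permutations)
  moreover have "perms_moving_1 n = P - P1"
    by (auto simp: P_def P1_def)
  ultimately have "card (perms_moving_1 n) = card P - card P1"
    by (simp add: card_Diff_subset finite_subset)
  also have "\<dots> = fact n - fact (n - 1)"
    unfolding P_def P1_def permutes_fixing_1 by (simp add: card_permutations)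
  also have "\<dots> = fact (n - 1) * (n - 1)"
    using assms by (cases n) (simp_all add: algebra_simps)
  finally show ?thesis .
qed

lemma basis_set_eq:
  "{Sum ((\<lambda>\<tau>. \<sigma> \<circ> \<tau>) ` T k 1) | \<sigma> k.
      \<sigma> permutes {1..n} \<and> \<sigma> (k + 1) = 1 \<and> 1 \<le> k \<and> k \<le> n - 1}
   = (\<lambda>\<sigma>. Sum (basis_support \<sigma>)) ` perms_moving_1 n"
proof (intro set_eqI iffI)
  fix b assume "b \<in> {Sum ((\<lambda>\<tau>. \<sigma> \<circ> \<tau>) ` T k 1) | \<sigma> k.
      \<sigma> permutes {1..n} \<and> \<sigma> (k + 1) = 1 \<and> 1 \<le> k \<and> k \<le> n - 1}"
  then obtain \<sigma> k where b: "b = Sum ((\<lambda>\<tau>. \<sigma> \<circ> \<tau>) ` T k 1)" and \<sigma>: "\<sigma> permutes {1..n}"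
    and k: "\<sigma> (k + 1) = 1" "1 \<le> k"
    by blast
  have "\<sigma> 1 \<noteq> 1"
    using injD[OF permutes_inj[OF \<sigma>], of 1 "k + 1"] k by auto
  then show "b \<in> (\<lambda>\<sigma>. Sum (basis_support \<sigma>)) ` perms_moving_1 n"
    using \<sigma> basis_support_eq[OF \<sigma> k(1)] unfolding b by (intro image_eqI[of _ _ \<sigma>]) auto
next
  fix b assume "b \<in> (\<lambda>\<sigma>. Sum (basis_support \<sigma>)) ` perms_moving_1 n"
  then obtain \<sigma> where b: "b = Sum (basis_support \<sigma>)" and \<sigma>: "\<sigma> \<in> perms_moving_1 n"
    by blast
  define k where "k = inv \<sigma> 1 - 1"
  have k: "1 \<le> k" "k \<le> n - 1" "\<sigma> (k + 1) = 1"
    using inv_apply_1[of \<sigma> n] \<sigma> by (auto simp: k_def)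
  then show "b \<in> {Sum ((\<lambda>\<tau>. \<sigma> \<circ> \<tau>) ` T k 1) | \<sigma> k.
      \<sigma> permutes {1..n} \<and> \<sigma> (k + 1) = 1 \<and> 1 \<le> k \<and> k \<le> n - 1}"
    using \<sigma> basis_support_eq[of \<sigma> n k] unfolding b by auto
qed

theorem theorem2:
  fixes n :: nat
  assumes "n \<ge> 2"
  defines "B \<equiv> {Sum ((\<lambda>\<tau>. \<sigma> \<circ> \<tau>) ` T k 1) | \<sigma> k.
                  \<sigma> permutes {1..n} \<and> \<sigma> (k + 1) = 1 \<and> 1 \<le> k \<and> k \<le> n - 1}"
  shows "\<not> module.dependent zscale B \<and> module.span zscale B = ker_beta n
         \<and> card B = fact (n - 1) * (n - 1)"
proof -
  interpret unitriangular "perms_moving_1 n" basis_support "\<lambda>\<sigma>. inv \<sigma> 1"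
    by (rule unitriangular_basis_support)
  have n: "1 \<le> n"
    using assms(1) by simp
  have B: "B = (\<lambda>\<sigma>. Sum (basis_support \<sigma>)) ` perms_moving_1 n"
    unfolding B_def by (rule basis_set_eq)
  show ?thesis
    unfolding B using independent_Sum_M span_basis_eq_ker_beta[OF n]
      card_image[OF inj_on_Sum_M] card_perms_moving_1[OF n] by simp
qed

end
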